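(* For all real $x,u,v$, $$\sum_{m,n=0}^{\infty}H_{m,n}(x)\frac{u^m}{m!}\frac{v^n}{n!}=\exp\!\left(-u^2+(2u+v)x-uv\right).$$
   Context: For integers $m,n\ge 0$, the two-index Hermite polynomial is $H_{m,n}(x)=\left(-\frac{d}{dx}+2x\right)^m(x^n)$, i.e. the operator $f\mapsto -f'+2xf$ applied $m$ times to $x^n$. *)

theory Defs
  imports "HOL-Analysis.Analysis" "HOL-Computational_Algebra.Polynomial"
begin

definition hermite_op :: "real poly \<Rightarrow> real poly" where
  "hermite_op p = - pderiv p + [:0, 2:] * p"

definition H2 :: "nat \<Rightarrow> nat \<Rightarrow> real poly" where
  "H2 m n = (hermite_op ^^ m) (monom 1 n)"

end

theory Submission
  imports Defs
begin

text \<open>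
  Write \<open>A = -d/dx + 2x\<close> for the operator \<open>hermite_op\<close> and \<open>X\<close> for multiplication by \<open>x\<close>,
  so that \<open>H_{m,n} = A\<^sup>m (X\<^sup>n 1)\<close>.  The proof rests on the commutation relation
  \<open>A X = X A - 1\<close>, which yields the recurrence in the second index
  \<open>H_{m,n+1} = x H_{m,n} - m H_{m-1,n}\<close>
  together with the Hermite recurrence for \<open>H_{m,0}\<close>.

  Summing the rows over \<open>n\<close> gives \<open>exp(2xu - u\<^sup>2 + (x-u)v)\<close>.
\<close>

section \<open>Operator algebra\<close>

lemma hermite_op_diff: "hermite_op (p - q) = hermite_op p - hermite_op q"
  unfolding hermite_op_def by (simp add: pderiv_diff algebra_simps smult_diff_right)

lemma hermite_op_smult: "hermite_op (smult c p) = smult c (hermite_op p)"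
  unfolding hermite_op_def
  by (simp add: pderiv_smult algebra_simps smult_add_right smult_diff_right)

lemma hermite_op_pCons0: "hermite_op (pCons 0 p) = pCons 0 (hermite_op p) - p"
  unfolding hermite_op_def by (simp add: pderiv_pCons pderiv_mult algebra_simps)

lemma hermite_op_iter_smult:
  "(hermite_op ^^ k) (smult c p) = smult c ((hermite_op ^^ k) p)"
  by (induction k) (simp_all add: hermite_op_smult)

lemma hermite_op_iter_pCons0:
  "(hermite_op ^^ k) (pCons 0 p) =
     pCons 0 ((hermite_op ^^ k) p) - smult (real k) ((hermite_op ^^ (k - 1)) p)"
proof (induction k)
  case 0
  then show ?case by simp
next
  case (Suc k)
  show ?case
  proof (cases k)
    case 0
    then show ?thesis by (simp add: hermite_op_pCons0)
  next
    case (Suc j)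
    have "(hermite_op ^^ Suc k) (pCons 0 p) =
          hermite_op (pCons 0 ((hermite_op ^^ k) p) - smult (real k) ((hermite_op ^^ (k - 1)) p))"
      using Suc.IH by simp
    also have "\<dots> = pCons 0 ((hermite_op ^^ Suc k) p) - (hermite_op ^^ k) p
                    - smult (real k) ((hermite_op ^^ k) p)"
      using Suc by (simp add: hermite_op_diff hermite_op_pCons0 hermite_op_smult)
    finally show ?thesis by (simp add: smult_add_left algebra_simps)
  qed
qed

lemma H2_Suc_right:
  "poly (H2 m (Suc n)) x = x * poly (H2 m n) x - real m * poly (H2 (m - 1) n) x"
proof -
  have "monom (1::real) (Suc n) = pCons 0 (monom 1 n)"
    by (simp add: monom_Suc)
  then show ?thesis
    unfolding H2_def by (simp add: hermite_op_iter_pCons0)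
qed

text \<open>Since \<open>A 1 = 2x\<close>, we have \<open>H_{m+1,0} = 2 H_{m,1}\<close>.\<close>
lemma H2_Suc_0: "poly (H2 (Suc m) 0) x = 2 * poly (H2 m 1) x"
proof -
  have "hermite_op (monom 1 0) = smult 2 (monom 1 1)"
    unfolding hermite_op_def by (simp add: monom_0 monom_Suc)
  then show ?thesis
    unfolding H2_def funpow_Suc_right o_def
    by (simp add: hermite_op_iter_smult del: funpow.simps)
qed

lemma H2_0_recurrence:
  "poly (H2 (Suc (Suc m)) 0) x =
     2 * x * poly (H2 (Suc m) 0) x - 2 * real (Suc m) * poly (H2 m 0) x"
  using H2_Suc_0[of "Suc m" x] H2_Suc_right[of "Suc m" 0 x] by simp

section \<open>The generating function of \<open>H_{m,0}\<close>\<close>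

lemma exp_series_real: "(\<lambda>n. y ^ n / fact n) sums exp (y::real)"
  using exp_converges[of y] by (simp add: divide_inverse mult.commute)

lemma exp_coeff_sums: "(\<lambda>i. c ^ i / fact i * u ^ i) sums exp (c * u :: real)"
  using exp_series_real[of "c * u"] by (simp add: power_mult_distrib)

lemma exp_coeff_abs_summable: "summable (\<lambda>i. \<bar>c ^ i / fact i * u ^ i\<bar> :: real)"
  using sums_summable[OF exp_series_real[of "\<bar>c * u\<bar>"]]
  by (simp add: abs_mult power_abs power_mult_distrib)

definition gauss_coeff :: "nat \<Rightarrow> real" where
  "gauss_coeff k = (if even k then (-1) ^ (k div 2) / fact (k div 2) else 0)"

lemma gauss_coeff_power:
  "gauss_coeff k * u ^ k = (if even k then (- u\<^sup>2) ^ (k div 2) / fact (k div 2) else 0)"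
proof (cases "even k")
  case True
  then obtain j where "k = 2 * j" by blast
  then show ?thesis by (simp add: gauss_coeff_def power_mult power_mult_distrib[symmetric])
qed (simp add: gauss_coeff_def)

lemma gauss_coeff_sums: "(\<lambda>k. gauss_coeff k * u ^ k) sums exp (- u\<^sup>2)"
  unfolding gauss_coeff_power using sums_if[OF sums_zero exp_series_real[of "- u\<^sup>2"]] by simp

lemma gauss_coeff_abs_sums: "(\<lambda>k. \<bar>gauss_coeff k * u ^ k\<bar>) sums exp (u\<^sup>2)"
proof -
  have "\<bar>gauss_coeff k * u ^ k\<bar> = (if even k then (u\<^sup>2) ^ (k div 2) / fact (k div 2) else 0)" for k
    unfolding gauss_coeff_power by (auto simp: power_minus_even abs_mult)
  then show ?thesis using sums_if[OF sums_zero exp_series_real[of "u\<^sup>2"]] by simp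
qed

text \<open>\<open>k g_k = -2 g_{k-2}\<close>: the coefficient form of \<open>(exp(-u\<^sup>2))' = -2u exp(-u\<^sup>2)\<close>.\<close>
lemma gauss_coeff_recurrence:
  "real k * gauss_coeff k = (if k \<ge> 2 then -2 * gauss_coeff (k - 2) else 0)"
proof (cases "even k")
  case True
  then obtain b where k: "k = 2 * b" by blast
  show ?thesis
  proof (cases b)
    case 0
    then show ?thesis using k by (simp add: gauss_coeff_def)
  next
    case (Suc b')
    have "k - 2 = 2 * b'" using k Suc by simp
    then show ?thesis
      using k Suc by (simp add: gauss_coeff_def fact_Suc field_simps del: of_nat_Suc) simp
  qed
next
  case False
  then have "odd (k - 2) \<or> k < 2" by auto
  then show ?thesis using False by (auto simp: gauss_coeff_def)
qed

text \<open>Taylor coefficients of \<open>exp(2xu - u\<^sup>2)\<close> in \<open>u\<close>, as a Cauchy product.\<close>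
definition hermite_coeff :: "real \<Rightarrow> nat \<Rightarrow> real" where
  "hermite_coeff x m = (\<Sum>i\<le>m. (2 * x) ^ i / fact i * gauss_coeff (m - i))"

text \<open>These coefficients obey the Hermite recurrence, divided by \<open>m!\<close>.\<close>
lemma hermite_coeff_recurrence:
  "real (Suc (Suc m)) * hermite_coeff x (Suc (Suc m)) =
     2 * x * hermite_coeff x (Suc m) - 2 * hermite_coeff x m"
proof -
  define N where "N = Suc (Suc m)"
  define a where "a i = (2 * x) ^ i / fact i" for i
  have a_Suc: "real (Suc i) * a (Suc i) = 2 * x * a i" for i
    unfolding a_def by (simp add: fact_Suc field_simps del: of_nat_Suc)
  have "real N * hermite_coeff x N =
        (\<Sum>i\<le>N. real i * a i * gauss_coeff (N - i)) +
        (\<Sum>i\<le>N. a i * (real (N - i) * gauss_coeff (N - i)))"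
    unfolding hermite_coeff_def a_def[symmetric] sum_distrib_left sum.distrib[symmetric]
    by (intro sum.cong refl) (auto simp: of_nat_diff algebra_simps)
  also have "(\<Sum>i\<le>N. real i * a i * gauss_coeff (N - i)) =
             (\<Sum>i\<le>Suc m. real (Suc i) * a (Suc i) * gauss_coeff (Suc m - i))"
    unfolding N_def by (subst sum.atMost_Suc_shift) simp
  also have "\<dots> = 2 * x * hermite_coeff x (Suc m)"
    unfolding hermite_coeff_def a_def[symmetric] sum_distrib_left
    by (simp only: a_Suc mult.assoc)
  also have "(\<Sum>i\<le>N. a i * (real (N - i) * gauss_coeff (N - i))) =
             (\<Sum>i\<le>m. a i * (-2 * gauss_coeff (m - i)))"
    unfolding N_def sum.atMost_Suc gauss_coeff_recurrence
    by (simp, intro sum.cong refl) (auto simp: Suc_diff_le)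
  also have "\<dots> = - 2 * hermite_coeff x m"
    unfolding hermite_coeff_def a_def sum_distrib_left by (simp add: algebra_simps)
  finally show ?thesis unfolding N_def by simp
qed

lemma H2_0_eq_hermite_coeff: "poly (H2 m 0) x = fact m * hermite_coeff x m"
proof -
  have "poly (H2 m 0) x = fact m * hermite_coeff x m \<and>
        poly (H2 (Suc m) 0) x = fact (Suc m) * hermite_coeff x (Suc m)"
  proof (induction m)
    case 0
    have "poly (H2 0 1) x = x" by (simp add: H2_def monom_Suc)
    then show ?case
      by (simp add: H2_def H2_Suc_0 hermite_coeff_def gauss_coeff_def hermite_op_def)
  next
    case (Suc m)
    have "poly (H2 (Suc (Suc m)) 0) x =
          fact (Suc m) * (2 * x * hermite_coeff x (Suc m) - 2 * hermite_coeff x m)"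
      using Suc.IH by (simp add: H2_0_recurrence algebra_simps)
    also have "\<dots> = fact (Suc m) * (real (Suc (Suc m)) * hermite_coeff x (Suc (Suc m)))"
      by (simp only: hermite_coeff_recurrence)
    also have "\<dots> = fact (Suc (Suc m)) * hermite_coeff x (Suc (Suc m))"
      by (metis fact_Suc mult.assoc mult.commute)
    finally show ?case using Suc.IH by simp
  qed
  then show ?thesis by simp
qed

lemma power_series_product_sums:
  fixes a b :: "nat \<Rightarrow> real"
  assumes a: "(\<lambda>i. a i * r ^ i) sums A" "summable (\<lambda>i. \<bar>a i * r ^ i\<bar>)"
    and b: "(\<lambda>i. b i * r ^ i) sums B" "summable (\<lambda>i. \<bar>b i * r ^ i\<bar>)"
  shows "(\<lambda>k. (\<Sum>i\<le>k. a i * b (k - i)) * r ^ k) sums (A * B)"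
proof -
  have "(\<Sum>i\<le>k. a i * r ^ i * (b (k - i) * r ^ (k - i))) = (\<Sum>i\<le>k. a i * b (k - i)) * r ^ k"
    for k
    unfolding sum_distrib_right
  proof (intro sum.cong refl)
    fix i assume "i \<in> {..k}"
    then have "r ^ i * r ^ (k - i) = r ^ k" by (simp add: power_add[symmetric])
    then show "a i * r ^ i * (b (k - i) * r ^ (k - i)) = a i * b (k - i) * r ^ k"
      by (metis mult.assoc mult.left_commute)
  qed
  with Cauchy_product_sums[of "\<lambda>i. a i * r ^ i" "\<lambda>i. b i * r ^ i"] a b show ?thesis
    by (simp add: sums_iff)
qed

lemma H2_0_generating_function:
  "(\<lambda>m. poly (H2 m 0) x * (u ^ m / fact m)) sums exp (2 * x * u - u\<^sup>2)"
proof -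
  have "(\<lambda>m. hermite_coeff x m * u ^ m) sums (exp (2 * x * u) * exp (- u\<^sup>2))"
    unfolding hermite_coeff_def
    by (rule power_series_product_sums[OF exp_coeff_sums exp_coeff_abs_summable
          gauss_coeff_sums sums_summable[OF gauss_coeff_abs_sums]])
  then show ?thesis by (simp add: H2_0_eq_hermite_coeff exp_diff exp_minus field_simps)
qed

section \<open>Transport of generating functions along the second index\<close>

text \<open>If \<open>F_{m,n+1} = a F_{m,n} + s m F_{m-1,n}\<close>, then \<open>\<Sum>_m F_{m,n} u\<^sup>m/m! = (a + s u)\<^sup>n \<Sum>_m F_{m,0} u\<^sup>m/m!\<close>,
  because the term \<open>m F_{m-1,n}\<close> shifts the exponential generating function by a factor \<open>u\<close>.\<close>
lemma recurrence_generating_function: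
  fixes F :: "nat \<Rightarrow> nat \<Rightarrow> real"
  assumes rec: "\<And>m n. F m (Suc n) = a * F m n + s * (real m * F (m - 1) n)"
    and base: "(\<lambda>m. F m 0 * (u ^ m / fact m)) sums G"
  shows "(\<lambda>m. F m n * (u ^ m / fact m)) sums (G * (a + s * u) ^ n)"
proof (induction n)
  case 0
  then show ?case using base by simp
next
  case (Suc n)
  define S where "S = G * (a + s * u) ^ n"
  have "(\<lambda>m. u * (F m n * (u ^ m / fact m))) sums (u * S)"
    using sums_mult[OF Suc.IH, of u] unfolding S_def .
  moreover have "(\<lambda>m. real (Suc m) * F (Suc m - 1) n * (u ^ Suc m / fact (Suc m))) =
                 (\<lambda>m. u * (F m n * (u ^ m / fact m)))"
    by (rule ext) (simp add: fact_Suc field_simps del: of_nat_Suc)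
  ultimately have shifted: "(\<lambda>m. real m * F (m - 1) n * (u ^ m / fact m)) sums (u * S)"
    using sums_Suc_iff[of "\<lambda>m. real m * F (m - 1) n * (u ^ m / fact m)"] by simp
  have "(\<lambda>m. a * (F m n * (u ^ m / fact m)) + s * (real m * F (m - 1) n * (u ^ m / fact m)))
          sums (a * S + s * (u * S))"
    by (intro sums_add sums_mult shifted) (use Suc.IH in \<open>simp add: S_def\<close>)
  moreover have "a * S + s * (u * S) = G * (a + s * u) ^ Suc n"
    unfolding S_def by (simp add: algebra_simps)
  ultimately show ?case by (simp add: rec algebra_simps)
qed

lemma H2_row_generating_function:
  "(\<lambda>m. poly (H2 m n) x * (u ^ m / fact m)) sums (exp (2 * x * u - u\<^sup>2) * (x - u) ^ n)"
  using recurrence_generating_function[where F = "\<lambda>m n. poly (H2 m n) x" and a = x and s = "-1",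
      OF _ H2_0_generating_function]
  by (simp add: H2_Suc_right)

section \<open>Absolute convergence\<close>

text \<open>A majorant of \<open>\<bar>H_{m,n}(x)\<bar>\<close>: start from the Cauchy product of the absolute
  series and run the recurrence of \<open>H2_Suc_right\<close> with all signs made positive.\<close>
fun H2_majorant :: "real \<Rightarrow> nat \<Rightarrow> nat \<Rightarrow> real" where
  "H2_majorant x m 0 = fact m * (\<Sum>i\<le>m. (2 * \<bar>x\<bar>) ^ i / fact i * \<bar>gauss_coeff (m - i)\<bar>)"
| "H2_majorant x m (Suc n) = \<bar>x\<bar> * H2_majorant x m n + real m * H2_majorant x (m - 1) n"

lemma H2_majorant_bound: "\<bar>poly (H2 m n) x\<bar> \<le> H2_majorant x m n"
proof (induction n arbitrary: m)
  case 0
  have "\<bar>hermite_coeff x m\<bar> \<le> (\<Sum>i\<le>m. (2 * \<bar>x\<bar>) ^ i / fact i * \<bar>gauss_coeff (m - i)\<bar>)"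
    unfolding hermite_coeff_def
    by (rule order_trans[OF sum_abs]) (simp add: abs_mult power_abs)
  then show ?case by (simp add: H2_0_eq_hermite_coeff abs_mult mult_left_mono)
next
  case (Suc n)
  have "\<bar>poly (H2 m (Suc n)) x\<bar> \<le> \<bar>x\<bar> * \<bar>poly (H2 m n) x\<bar> + real m * \<bar>poly (H2 (m - 1) n) x\<bar>"
    unfolding H2_Suc_right by (rule order_trans[OF abs_triangle_ineq4]) (simp add: abs_mult)
  also have "\<dots> \<le> \<bar>x\<bar> * H2_majorant x m n + real m * H2_majorant x (m - 1) n"
    by (intro add_mono mult_left_mono Suc.IH) auto
  finally show ?case by simp
qed

text \<open>The majorant obeys a recurrence of the transport shape, so its rows have closed-form sums.\<close>
lemma H2_majorant_row_sums:
  "(\<lambda>m. H2_majorant x m n * (\<bar>u\<bar> ^ m / fact m))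
     sums (exp (2 * \<bar>x\<bar> * \<bar>u\<bar>) * exp (u\<^sup>2) * (\<bar>x\<bar> + \<bar>u\<bar>) ^ n)"
proof -
  have "(\<lambda>k. \<bar>gauss_coeff k\<bar> * \<bar>u\<bar> ^ k) sums exp (u\<^sup>2)"
    using gauss_coeff_abs_sums[of u] by (simp add: abs_mult power_abs)
  then have "(\<lambda>m. (\<Sum>i\<le>m. (2 * \<bar>x\<bar>) ^ i / fact i * \<bar>gauss_coeff (m - i)\<bar>) * \<bar>u\<bar> ^ m)
          sums (exp (2 * \<bar>x\<bar> * \<bar>u\<bar>) * exp (u\<^sup>2))"
    by (intro power_series_product_sums exp_coeff_sums exp_coeff_abs_summable)
      (auto dest: sums_summable)
  then show ?thesis
    using recurrence_generating_function[where F = "H2_majorant x" and a = "\<bar>x\<bar>" and s = 1]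
    by simp
qed

lemma dominated_double_series_has_sum:
  fixes t T :: "nat \<Rightarrow> nat \<Rightarrow> real"
  assumes bound: "\<And>m n. \<bar>t m n\<bar> \<le> T m n"
    and T_rows: "\<And>n. (\<lambda>m. T m n) sums B n" and B: "summable B"
    and t_rows: "\<And>n. (\<lambda>m. t m n) sums A n" and A: "A sums S"
  shows "((\<lambda>(m, n). t m n) has_sum S) UNIV"
proof -
  have T_nonneg: "T m n \<ge> 0" for m n
    using bound[of m n] by linarith
  have T_rows': "((\<lambda>m. T m n) has_sum B n) UNIV" for n
    using sums_nonneg_imp_has_sum[OF T_rows T_nonneg] .
  have "B summable_on UNIV"
    using B by (rule summable_nonneg_imp_summable_on_strong)
      (use has_sum_nonneg[OF T_rows'] T_nonneg in auto)
  then have "(\<lambda>(n, m). T m n) summable_on UNIV \<times> UNIV"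
    by (intro summable_on_SigmaI[where g = B]) (use T_rows' T_nonneg in auto)
  then have "(\<lambda>p. norm ((\<lambda>(n, m). t m n) p)) summable_on UNIV \<times> UNIV"
    by (rule Infinite_Sum.abs_summable_on_comparison_test') (use bound in auto)
  then have "(\<lambda>(n, m). t m n) summable_on UNIV \<times> UNIV"
    by (rule Infinite_Sum.abs_summable_summable)
  then obtain S' where S': "((\<lambda>(n, m). t m n) has_sum S') (UNIV \<times> UNIV)"
    by (auto simp: summable_on_def)
  have t_rows': "((\<lambda>m. t m n) has_sum A n) UNIV" for n
  proof (rule norm_summable_imp_has_sum[OF _ t_rows])
    show "summable (\<lambda>m. norm (t m n))"
      by (rule summable_comparison_test[OF _ sums_summable[OF T_rows]]) (use bound in auto)
  qed
  have "A sums S'"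
    using has_sum_SigmaD[OF S'[unfolded UNIV_Times_UNIV[symmetric]]] t_rows'
    by (auto intro: has_sum_imp_sums)
  then have "S' = S" using A by (rule sums_unique2)
  then have "((\<lambda>(m, n). (\<lambda>(n, m). t m n) (n, m)) has_sum S) (UNIV \<times> UNIV)"
    using S' by (simp only: has_sum_swap[symmetric])
  then show ?thesis by simp
qed

theorem mainTheorem12:
  fixes x u v :: real
  shows "((\<lambda>(m, n). poly (H2 m n) x * (u ^ m / fact m) * (v ^ n / fact n))
           has_sum exp (- u\<^sup>2 + (2 * u + v) * x - u * v)) (UNIV :: (nat \<times> nat) set)"
proof (rule dominated_double_series_has_sum)
  define G where "G = exp (2 * x * u - u\<^sup>2)"
  define Gabs where "Gabs = exp (2 * \<bar>x\<bar> * \<bar>u\<bar>) * exp (u\<^sup>2)"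
  show "\<bar>poly (H2 m n) x * (u ^ m / fact m) * (v ^ n / fact n)\<bar> \<le>
        H2_majorant x m n * (\<bar>u\<bar> ^ m / fact m) * (\<bar>v\<bar> ^ n / fact n)" for m n
    using H2_majorant_bound[of m n x]
    by (simp add: abs_mult power_abs mult_right_mono del: times_divide_eq_right)
  show "(\<lambda>m. H2_majorant x m n * (\<bar>u\<bar> ^ m / fact m) * (\<bar>v\<bar> ^ n / fact n))
          sums (Gabs * ((\<bar>x\<bar> + \<bar>u\<bar>) * \<bar>v\<bar>) ^ n / fact n)" for n
    using sums_mult2[OF H2_majorant_row_sums[of x n u], of "\<bar>v\<bar> ^ n / fact n"]
    by (simp add: Gabs_def power_mult_distrib mult.assoc)
  show "summable (\<lambda>n. Gabs * ((\<bar>x\<bar> + \<bar>u\<bar>) * \<bar>v\<bar>) ^ n / fact n)"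
    using sums_summable[OF sums_mult[OF exp_series_real, of Gabs]] by (simp add: mult.assoc)
  show "(\<lambda>m. poly (H2 m n) x * (u ^ m / fact m) * (v ^ n / fact n))
          sums (G * ((x - u) * v) ^ n / fact n)" for n
    using sums_mult2[OF H2_row_generating_function[of n x u], of "v ^ n / fact n"]
    by (simp add: G_def power_mult_distrib mult.assoc)
  have "(\<lambda>n. G * ((x - u) * v) ^ n / fact n) sums (G * exp ((x - u) * v))"
    using sums_mult[OF exp_series_real, of G] by (simp add: mult.assoc)
  moreover have "G * exp ((x - u) * v) = exp (- u\<^sup>2 + (2 * u + v) * x - u * v)"
    unfolding G_def exp_add[symmetric] by (simp add: algebra_simps)
  ultimately show "(\<lambda>n. G * ((x - u) * v) ^ n / fact n) sums exp (- u\<^sup>2 + (2 * u + v) * x - u * v)"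
    by simp
qed

end
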